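(* Let $\mu>0$ and let $g:[0,1]\to\mathbb{R}$ be a function such that $t\mapsto t^{\mu}g(t)$ is integrable on $[0,1]$. For integers $n\ge 0$ define the function $$\varphi_{n}(y)=\int_{0}^{1} t^{\mu}\,U_{n-1}\bigl(y-(1+y)t\bigr)\,g(t)\,\mathrm{d}t ,$$ where $U_k$ denotes the Chebyshev polynomial of the second kind of degree $k$ and $U_{-1}\equiv 0$ (so each $\varphi_n$ is a polynomial in $y$ of degree at most $n-1$). Then for every $n\ge 2$, $$\left((1+y)\frac{\mathrm{d}}{\mathrm{d} y} - n\right)\varphi_{n+1}(y) = \left((1+y)\frac{\mathrm{d}}{\mathrm{d} y} + n\right)\varphi_{n-1}(y) + 2n\,\varphi_n(y).$$
   Context: In the paper, $g=g_j$ is any one of the functions $g_1,\dots,g_r$ appearing in a separable approximation $G(y,t)\approx\sum_{j=1}^r\sigma_j f_j(y)g_j(t)$, and the statement is asserted for all $j$; the statement above is for an arbitrary such function $g$. $U_n$ is the Chebyshev polynomial of the second kind, with the convention $U_{-1}=0$. *)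

theory Defs
  imports "HOL-Analysis.Analysis"
begin

fun chebU :: "nat \<Rightarrow> real \<Rightarrow> real" where
  "chebU 0 x = 1"
| "chebU (Suc 0) x = 2 * x"
| "chebU (Suc (Suc k)) x = 2 * x * chebU (Suc k) x - chebU k x"

definition chebU_pred :: "nat \<Rightarrow> real \<Rightarrow> real" where
  "chebU_pred n x = (if n = 0 then 0 else chebU (n - 1) x)"

definition phi :: "real \<Rightarrow> (real \<Rightarrow> real) \<Rightarrow> nat \<Rightarrow> real \<Rightarrow> real" where
  "phi \<mu> g n y = (LINT t:{0..1}|lborel. t powr \<mu> * chebU_pred n (y - (1 + y) * t) * g t)"

end

theory Submission
  imports Defs "HOL-Computational_Algebra.Polynomial"
begin

text \<open>
  Put \<open>F(t) = t\<^sup>\<mu> g(t)\<close> and \<open>x = y - (1 + y) t\<close>, so that \<open>phi_(k+1)(y)\<close> is the integral of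
  \<open>F(t) U_k(x)\<close>. Differentiating in \<open>y\<close> multiplies the integrand by \<open>(1 - t) U_k'(x)\<close>, and
  \<open>(1 + y)(1 - t) = 1 + x\<close>. The claim is therefore the integral of the polynomial identity
  \<open>(1 + x)(U_(k+2)' - U_k') = (k + 2)(U_(k+2) + U_k) + 2(k + 2) U_(k+1)\<close>, a consequence of
  \<open>U_(k+2)' - U_k' = 2(k + 2) U_(k+1)\<close> and the three-term recurrence.
  Differentiation under the integral sign needs no limit theorem: by Horner's scheme the integral
  is an affine function of \<open>y\<close> whose coefficients are integrals of the same kind with the weights
  \<open>F(t) (1 - t)\<close> and \<open>F(t) t\<close>.
\<close>

lemma set_integrable_mult_continuous:
  fixes f h :: "'a::euclidean_space \<Rightarrow> real"
  assumes f: "set_integrable lborel S f" and S: "compact S" and h: "continuous_on S h"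
  shows "set_integrable lborel S (\<lambda>t. f t * h t)"
proof -
  obtain B where B: "\<And>t. t \<in> S \<Longrightarrow> \<bar>h t\<bar> \<le> B"
    using compact_imp_bounded[OF compact_continuous_image[OF h S]]
    by (auto simp: bounded_iff)
  have "(\<lambda>t. indicator S t * f t) \<in> borel_measurable lborel"
    using f by (simp add: set_integrable_def)
  moreover have "(\<lambda>t. indicator S t * h t) \<in> borel_measurable lborel"
    using set_measurable_continuous_on[OF _ h] S
    by (simp add: compact_imp_closed set_borel_measurable_def)
  ultimately have "(\<lambda>t. (indicator S t * f t) * (indicator S t * h t)) \<in> borel_measurable lborel"
    by measurable
  also have "(\<lambda>t. (indicator S t * f t) * (indicator S t * h t))
      = (\<lambda>t. indicator S t *\<^sub>R (f t * h t))"
    by (auto simp: indicator_def)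
  finally have "set_borel_measurable lborel S (\<lambda>t. f t * h t)"
    by (simp add: set_borel_measurable_def)
  moreover have "AE t in lborel. t \<in> S \<longrightarrow> norm (f t * h t) \<le> norm (B * f t)"
  proof (intro AE_I2 impI)
    fix t assume "t \<in> S"
    then have "\<bar>f t\<bar> * \<bar>h t\<bar> \<le> \<bar>f t\<bar> * \<bar>B\<bar>"
      using B[OF \<open>t \<in> S\<close>] by (simp add: mult_left_mono)
    then show "norm (f t * h t) \<le> norm (B * f t)"
      by (simp add: abs_mult mult.commute)
  qed
  moreover have "set_integrable lborel S (\<lambda>t. B * f t)"
    using f by simp
  ultimately show ?thesis
    using set_integrable_bound by blast
qed

definition poly_integral :: "(real \<Rightarrow> real) \<Rightarrow> real poly \<Rightarrow> real \<Rightarrow> real" where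
  "poly_integral F p y = (LINT t:{0..1}|lborel. F t * poly p (y - (1 + y) * t))"

lemma set_integrable_mult_poly:
  fixes F :: "real \<Rightarrow> real"
  assumes "set_integrable lborel {0..1} F"
  shows "set_integrable lborel {0..1} (\<lambda>t. F t * poly p (y - (1 + y) * t))"
  by (rule set_integrable_mult_continuous[OF assms]) (auto intro!: continuous_intros)

lemma poly_integral_smult [simp]: "poly_integral F (smult c p) y = c * poly_integral F p y"
  by (simp add: poly_integral_def mult.left_commute)

lemma poly_integral_add:
  assumes "set_integrable lborel {0..1} F"
  shows "poly_integral F (p + q) y = poly_integral F p y + poly_integral F q y"
  using set_integrable_mult_poly[OF assms]
  by (simp add: poly_integral_def distrib_left)

lemma poly_integral_diff:
  assumes "set_integrable lborel {0..1} F"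
  shows "poly_integral F (p - q) y = poly_integral F p y - poly_integral F q y"
  using set_integrable_mult_poly[OF assms]
  by (simp add: poly_integral_def right_diff_distrib)

lemma poly_integral_pCons:
  assumes F: "set_integrable lborel {0..1} F"
  shows "poly_integral F (pCons a p) y
    = a * (LINT t:{0..1}|lborel. F t) + y * poly_integral (\<lambda>t. F t * (1 - t)) p y
      - poly_integral (\<lambda>t. F t * t) p y"
proof -
  have F1: "set_integrable lborel {0..1} (\<lambda>t. F t * (1 - t))"
   and F2: "set_integrable lborel {0..1} (\<lambda>t. F t * t)"
    by (rule set_integrable_mult_continuous[OF F]; auto intro!: continuous_intros)+
  have "poly_integral F (pCons a p) y = (LINT t:{0..1}|lborel. a * F t
      + (y * (F t * (1 - t) * poly p (y - (1 + y) * t)) - F t * t * poly p (y - (1 + y) * t)))"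
    unfolding poly_integral_def by (rule set_lebesgue_integral_cong) (auto simp: algebra_simps)
  also have "\<dots> = a * (LINT t:{0..1}|lborel. F t) + y * poly_integral (\<lambda>t. F t * (1 - t)) p y
      - poly_integral (\<lambda>t. F t * t) p y"
    using F set_integrable_mult_poly[OF F1] set_integrable_mult_poly[OF F2]
    by (simp add: poly_integral_def)
  finally show ?thesis .
qed

lemma has_real_derivative_poly_integral:
  assumes "set_integrable lborel {0..1} F"
  shows "(poly_integral F p has_real_derivative
           poly_integral (\<lambda>t. F t * (1 - t)) (pderiv p) y) (at y)"
  using assms
proof (induction p arbitrary: F)
  case 0
  then show ?case by (simp add: poly_integral_def)
next
  case (pCons a p)
  define F1 where "F1 = (\<lambda>t. F t * (1 - t))"
  define F2 where "F2 = (\<lambda>t. F t * t)"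
  have F1: "set_integrable lborel {0..1} F1" and F2: "set_integrable lborel {0..1} F2"
    unfolding F1_def F2_def
    by (rule set_integrable_mult_continuous[OF pCons.prems]; auto intro!: continuous_intros)+
  have "poly_integral F (pCons a p)
      = (\<lambda>z. a * (LINT t:{0..1}|lborel. F t) + z * poly_integral F1 p z - poly_integral F2 p z)"
    by (rule ext) (simp add: poly_integral_pCons[OF pCons.prems] F1_def F2_def)
  moreover have "((\<lambda>z. a * (LINT t:{0..1}|lborel. F t) + z * poly_integral F1 p z - poly_integral F2 p z)
      has_real_derivative poly_integral F1 p y + y * poly_integral (\<lambda>t. F1 t * (1 - t)) (pderiv p) y
        - poly_integral (\<lambda>t. F2 t * (1 - t)) (pderiv p) y) (at y)"
    using pCons.IH[OF F1] pCons.IH[OF F2] by (auto intro!: derivative_eq_intros)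
  moreover have "poly_integral F1 (pderiv (pCons a p)) y
      = poly_integral F1 p y + y * poly_integral (\<lambda>t. F1 t * (1 - t)) (pderiv p) y
        - poly_integral (\<lambda>t. F2 t * (1 - t)) (pderiv p) y"
    using F1 by (simp add: pderiv_pCons poly_integral_add poly_integral_pCons F1_def F2_def mult_ac)
  ultimately show ?case by (simp add: F1_def)
qed

lemma one_plus_mult_poly_integral:
  "(1 + y) * poly_integral (\<lambda>t. F t * (1 - t)) p y = poly_integral F ([:1, 1:] * p) y"
  unfolding poly_integral_def
  by (subst set_integral_mult_right[symmetric], rule set_lebesgue_integral_cong)
     (auto simp: algebra_simps)

fun chebU_poly :: "nat \<Rightarrow> real poly" where
  "chebU_poly 0 = 1"
| "chebU_poly (Suc 0) = [:0, 2:]"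
| "chebU_poly (Suc (Suc k)) = [:0, 2:] * chebU_poly (Suc k) - chebU_poly k"

lemma poly_chebU_poly [simp]: "poly (chebU_poly k) x = chebU k x"
  by (induction k rule: chebU_poly.induct) auto

lemma pderiv_chebU_poly_Suc_Suc:
  "pderiv (chebU_poly (Suc (Suc k)))
    = pderiv (chebU_poly k) + smult (2 * (real k + 2)) (chebU_poly (Suc k))"
proof (induction k rule: chebU_poly.induct)
  case (3 k)
  let ?D = "\<lambda>m x. poly (pderiv (chebU_poly m)) x"
  have rec: "?D (Suc (Suc m)) x = 2 * chebU (Suc m) x + 2 * x * ?D (Suc m) x - ?D m x" for m x
    by (simp add: pderiv_mult pderiv_diff pderiv_pCons pderiv_smult)
  have "?D (Suc (Suc (Suc (Suc k)))) x
      = ?D (Suc (Suc k)) x + 2 * (real (Suc (Suc k)) + 2) * chebU (Suc (Suc (Suc k))) x" for x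
    using 3[THEN arg_cong, of "\<lambda>p. poly p x"] rec[of "Suc (Suc k)" x] rec[of k x]
    by simp algebra
  then show ?case
    by (simp flip: poly_eq_poly_eq_iff add: fun_eq_iff)
qed (simp_all add: pderiv_mult pderiv_pCons pderiv_diff pderiv_smult fun_eq_iff algebra_simps
       flip: poly_eq_poly_eq_iff)

lemma chebU_poly_derivative_recurrence:
  "[:1, 1:] * pderiv (chebU_poly (Suc (Suc k))) - smult (real k + 2) (chebU_poly (Suc (Suc k)))
   = [:1, 1:] * pderiv (chebU_poly k) + smult (real k + 2) (chebU_poly k)
     + smult (2 * (real k + 2)) (chebU_poly (Suc k))"
  unfolding poly_eq_poly_eq_iff[symmetric]
  by (rule ext) (simp add: pderiv_chebU_poly_Suc_Suc algebra_simps del: chebU_poly.simps)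

lemma phi_Suc_eq_poly_integral:
  "phi \<mu> g (Suc k) = poly_integral (\<lambda>t. t powr \<mu> * g t) (chebU_poly k)"
  by (auto simp: phi_def poly_integral_def chebU_pred_def mult_ac)

theorem theorem2p2:
  fixes \<mu> :: real and g :: "real \<Rightarrow> real" and n :: nat and y :: real
  assumes "\<mu> > 0"
    and "set_integrable lborel {0..1} (\<lambda>t. t powr \<mu> * g t)"
    and "n \<ge> 2"
  shows "(1 + y) * deriv (phi \<mu> g (n + 1)) y - real n * phi \<mu> g (n + 1) y
         = (1 + y) * deriv (phi \<mu> g (n - 1)) y + real n * phi \<mu> g (n - 1) y
           + 2 * real n * phi \<mu> g n y"
proof -
  obtain k where n: "n = Suc (Suc k)"
    using \<open>n \<ge> 2\<close> by (metis add_2_eq_Suc le_Suc_ex)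
  define F where "F = (\<lambda>t. t powr \<mu> * g t)"
  have F: "set_integrable lborel {0..1} F"
    unfolding F_def by (fact assms(2))
  have phi: "phi \<mu> g (Suc m) = poly_integral F (chebU_poly m)" for m
    unfolding F_def by (rule phi_Suc_eq_poly_integral)
  have deriv_poly_integral:
    "deriv (poly_integral F p) y = poly_integral (\<lambda>t. F t * (1 - t)) (pderiv p) y" for p
    by (rule DERIV_imp_deriv[OF has_real_derivative_poly_integral[OF F]])
  have "(1 + y) * deriv (phi \<mu> g (n + 1)) y - real n * phi \<mu> g (n + 1) y
      = (1 + y) * poly_integral (\<lambda>t. F t * (1 - t)) (pderiv (chebU_poly (Suc (Suc k)))) y
        - (real k + 2) * poly_integral F (chebU_poly (Suc (Suc k))) y"
    by (simp add: n phi deriv_poly_integral del: chebU_poly.simps)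
  also have "\<dots> = poly_integral F ([:1, 1:] * pderiv (chebU_poly (Suc (Suc k)))
      - smult (real k + 2) (chebU_poly (Suc (Suc k)))) y"
    by (simp only: one_plus_mult_poly_integral poly_integral_diff[OF F] poly_integral_smult)
  also have "\<dots> = poly_integral F ([:1, 1:] * pderiv (chebU_poly k)
      + smult (real k + 2) (chebU_poly k) + smult (2 * (real k + 2)) (chebU_poly (Suc k))) y"
    by (simp only: chebU_poly_derivative_recurrence)
  also have "\<dots> = (1 + y) * poly_integral (\<lambda>t. F t * (1 - t)) (pderiv (chebU_poly k)) y
      + (real k + 2) * poly_integral F (chebU_poly k) y
      + 2 * (real k + 2) * poly_integral F (chebU_poly (Suc k)) y"
    by (simp only: one_plus_mult_poly_integral poly_integral_add[OF F] poly_integral_smult)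
  also have "\<dots> = (1 + y) * deriv (phi \<mu> g (n - 1)) y + real n * phi \<mu> g (n - 1) y
      + 2 * real n * phi \<mu> g n y"
    by (simp add: n phi deriv_poly_integral algebra_simps del: chebU_poly.simps)
  finally show ?thesis .
qed

end
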